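(* Let $d=5$ and $n\ge4$. Let $(p_1,\dots,p_n)\in V(I_{5,n})$ and $z_1,\dots,z_n\in\mathbb{C}^4$. For each $j\in\{1,\dots,n\}$, let $W_j$ be the $4\times n$ matrix with columns $|1\rangle,\dots,|j-1\rangle,z_j,|j+1\rangle,\dots,|n\rangle$, and $M^{(j)}=W_j^T\,C\,P_j\,W_j$. Then $M^{(j)}$ is skew symmetric of rank $\le2$, and its entries are $M^{(j)}_{ik}=\langle ijk\rangle$ for $i,k\ne j$, $M^{(j)}_{ij}=\langle ij\rangle$ for $i\ne j$, $M^{(j)}_{jk}=\langle jk\rangle$ for $k\neq j$, and $M^{(j)}_{jj}=0$. In particular all $4\times4$ Pfaffians of $M^{(j)}$ vanish. Furthermore, the $n\times(n^2+n)$ matrix $(S\,|\,T_1\,|\,\cdots\,|\,T_n)$ has rank $\le4$.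
   Context: $x\cdot y=-x_1y_1+x_2y_2+\cdots+x_5y_5$ on $\mathbb{C}^5$; $V(I_{5,n})$ is the set of $(p_1,\dots,p_n)\in(\mathbb{C}^5)^n$ with $p_i\cdot p_i=0$ for all $i$ and $\sum_ip_i=0$. Dirac matrices for $d=5$ ($4\times4$): with $A=\begin{pmatrix}0&1\\-1&0\end{pmatrix}$, $B=\begin{pmatrix}0&1\\1&0\end{pmatrix}$ and $\otimes$ the Kronecker product, $\Gamma_1=A\otimes\mathrm{diag}(-1,1)$, $\Gamma_2=B\otimes\mathrm{diag}(-1,1)$, $\Gamma_3=\mathrm{Id}_2\otimes B$, $\Gamma_4=\mathrm{Id}_2\otimes\begin{pmatrix}0&-i\\i&0\end{pmatrix}$, $\Gamma_5=-i\,\Gamma_1\Gamma_2\Gamma_3\Gamma_4$. Charge conjugation matrix $C=\Gamma_4\Gamma_1$. $P_i=-p_{i1}\Gamma_1+p_{i2}\Gamma_2+\cdots+p_{i5}\Gamma_5$, $|i\rangle=P_iz_i$, $\langle ij\rangle=|i\rangle^TC|j\rangle$, $\langle ijk\rangle=|i\rangle^TCP_j|k\rangle$, $S=(\langle ij\rangle)_{i,j}$, $T_j=(\langle ijk\rangle)_{i,k}$. *)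

theory Defs
  imports "Jordan_Normal_Form.DL_Rank"
begin

text \<open>Conventions: indices are 0-based. Points p i (i < n) are complex vectors of
dimension 5, component k (k < 5) corresponding to x_(k+1) of the paper.
Spinors z i are complex vectors of dimension 4.\<close>

definition mink :: "complex vec \<Rightarrow> complex vec \<Rightarrow> complex" where
  "mink x y = - (x $ 0 * y $ 0) + (\<Sum>k\<in>{1..<5}. x $ k * y $ k)"

definition kron :: "complex mat \<Rightarrow> complex mat \<Rightarrow> complex mat" where
  "kron A B = mat (dim_row A * dim_row B) (dim_col A * dim_col B)
     (\<lambda>(i,j). A $$ (i div dim_row B, j div dim_col B) * B $$ (i mod dim_row B, j mod dim_col B))"

definition mA :: "complex mat" where "mA = mat_of_rows_list 2 [[0,1],[-1,0]]"
definition mB :: "complex mat" where "mB = mat_of_rows_list 2 [[0,1],[1,0]]"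
definition mD :: "complex mat" where "mD = mat_of_rows_list 2 [[-1,0],[0,1]]"
definition mY :: "complex mat" where "mY = mat_of_rows_list 2 [[0,-\<i>],[\<i>,0]]"

definition Gamma1 :: "complex mat" where "Gamma1 = kron mA mD"
definition Gamma2 :: "complex mat" where "Gamma2 = kron mB mD"
definition Gamma3 :: "complex mat" where "Gamma3 = kron (1\<^sub>m 2) mB"
definition Gamma4 :: "complex mat" where "Gamma4 = kron (1\<^sub>m 2) mY"
definition Gamma5 :: "complex mat" where
  "Gamma5 = (- \<i>) \<cdot>\<^sub>m (Gamma1 * Gamma2 * Gamma3 * Gamma4)"

definition Gamma :: "nat \<Rightarrow> complex mat" where
  "Gamma k = (if k = 0 then Gamma1 else if k = 1 then Gamma2 else if k = 2 then Gamma3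
              else if k = 3 then Gamma4 else Gamma5)"

definition Cconj :: "complex mat" where "Cconj = Gamma4 * Gamma1"

definition slash :: "complex vec \<Rightarrow> complex mat" where
  "slash x = (- (x $ 0)) \<cdot>\<^sub>m Gamma 0 + (x $ 1) \<cdot>\<^sub>m Gamma 1 + (x $ 2) \<cdot>\<^sub>m Gamma 2
             + (x $ 3) \<cdot>\<^sub>m Gamma 3 + (x $ 4) \<cdot>\<^sub>m Gamma 4"

definition ket :: "(nat \<Rightarrow> complex vec) \<Rightarrow> (nat \<Rightarrow> complex vec) \<Rightarrow> nat \<Rightarrow> complex vec" where
  "ket p z i = slash (p i) *\<^sub>v z i"

definition angle2 :: "(nat \<Rightarrow> complex vec) \<Rightarrow> (nat \<Rightarrow> complex vec) \<Rightarrow> nat \<Rightarrow> nat \<Rightarrow> complex" where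
  "angle2 p z i j = ket p z i \<bullet> (Cconj *\<^sub>v ket p z j)"

definition angle3 :: "(nat \<Rightarrow> complex vec) \<Rightarrow> (nat \<Rightarrow> complex vec) \<Rightarrow> nat \<Rightarrow> nat \<Rightarrow> nat \<Rightarrow> complex" where
  "angle3 p z i j k = ket p z i \<bullet> ((Cconj * slash (p j)) *\<^sub>v ket p z k)"

definition Wmat :: "nat \<Rightarrow> (nat \<Rightarrow> complex vec) \<Rightarrow> (nat \<Rightarrow> complex vec) \<Rightarrow> nat \<Rightarrow> complex mat" where
  "Wmat n p z j = mat 4 n (\<lambda>(a,b). if b = j then z j $ a else ket p z b $ a)"

definition Mmat :: "nat \<Rightarrow> (nat \<Rightarrow> complex vec) \<Rightarrow> (nat \<Rightarrow> complex vec) \<Rightarrow> nat \<Rightarrow> complex mat" where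
  "Mmat n p z j = transpose_mat (Wmat n p z j) * Cconj * slash (p j) * Wmat n p z j"

definition Smat :: "nat \<Rightarrow> (nat \<Rightarrow> complex vec) \<Rightarrow> (nat \<Rightarrow> complex vec) \<Rightarrow> complex mat" where
  "Smat n p z = mat n n (\<lambda>(i,j). angle2 p z i j)"

definition Tmat :: "nat \<Rightarrow> (nat \<Rightarrow> complex vec) \<Rightarrow> (nat \<Rightarrow> complex vec) \<Rightarrow> nat \<Rightarrow> complex mat" where
  "Tmat n p z j = mat n n (\<lambda>(i,k). angle3 p z i j k)"

definition STmat :: "nat \<Rightarrow> (nat \<Rightarrow> complex vec) \<Rightarrow> (nat \<Rightarrow> complex vec) \<Rightarrow> complex mat" where
  "STmat n p z = mat n (n * n + n) (\<lambda>(i,c). if c < n then Smat n p z $$ (i,c)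
       else Tmat n p z ((c - n) div n) $$ (i, (c - n) mod n))"

definition pf4 :: "complex mat \<Rightarrow> nat \<Rightarrow> nat \<Rightarrow> nat \<Rightarrow> nat \<Rightarrow> complex" where
  "pf4 M a b c d = M $$ (a,b) * M $$ (c,d) - M $$ (a,c) * M $$ (b,d) + M $$ (a,d) * M $$ (b,c)"

definition in_V :: "nat \<Rightarrow> (nat \<Rightarrow> complex vec) \<Rightarrow> bool" where
  "in_V n p \<longleftrightarrow> (\<forall>i<n. dim_vec (p i) = 5 \<and> mink (p i) (p i) = 0)
     \<and> (\<forall>k<5. (\<Sum>i<n. p i $ k) = 0)"

end

theory Submission
  imports Defs
begin

text \<open>For every x the matrix C P_x is skew-symmetric with Pfaffian x . x. For a null momentum p_j
it is therefore a skew 4 x 4 matrix with vanishing Pfaffian, i.e. a wedge u v^T - v u^T of two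
spinors. Then M^(j) = W_j^T (C P_j) W_j is the wedge of W_j^T u and W_j^T v, so it is skew, has
rank at most 2 and all its 4 x 4 Pfaffians vanish. Its entries are the brackets because the columns
of W_j are the |i> and P_j z_j = |j>, and the (j,k) entry follows from the skewness of M^(j) and of
C. Finally, every entry in row i of (S | T_1 | ... | T_n) is <i| C applied to a vector of C^4, so
this matrix factors through C^4.\<close>

lemma skew_mat_entry:
  assumes "transpose_mat K = - K" "K \<in> carrier_mat m m" "i < m" "j < m"
  shows "K $$ (i,j) = - K $$ (j,i)"
proof -
  have "K $$ (i,j) = transpose_mat K $$ (j,i)" using assms(2-4) by simp
  also have "\<dots> = - K $$ (j,i)" using assms by simp
  finally show ?thesis .
qed

lemma skew_scalar_prod_mult_mat_vec:
  fixes K :: "'a::comm_ring mat"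
  assumes "transpose_mat K = - K" "K \<in> carrier_mat m m" "v \<in> carrier_vec m" "w \<in> carrier_vec m"
  shows "v \<bullet> (K *\<^sub>v w) = - (w \<bullet> (K *\<^sub>v v))"
proof -
  have "v \<bullet> (K *\<^sub>v w) = (transpose_mat K *\<^sub>v v) \<bullet> w"
    using transpose_vec_mult_scalar[OF assms(2,4,3)] by simp
  also have "\<dots> = - ((K *\<^sub>v v) \<bullet> w)" using assms by simp
  also have "\<dots> = - (w \<bullet> (K *\<^sub>v v))" using assms by (simp add: comm_scalar_prod[of _ m])
  finally show ?thesis .
qed

lemma index_congruence_mat:
  fixes K :: "'a::comm_semiring_0 mat"
  assumes "W \<in> carrier_mat m n" "K \<in> carrier_mat m m" "x < n" "y < n"
  shows "(transpose_mat W * K * W) $$ (x,y) = col W x \<bullet> (K *\<^sub>v col W y)"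
proof -
  have "dim_row K = m" using assms(2) by blast
  then show ?thesis
    using assms by (simp add: assoc_mult_mat[of _ n m _ m _ n] mult_mat_vec_def)
qed

lemma skew_congruence_mat:
  fixes K :: "'a::comm_ring mat"
  assumes W: "W \<in> carrier_mat m n" and K: "K \<in> carrier_mat m m" and skew: "transpose_mat K = - K"
  shows "transpose_mat (transpose_mat W * K * W) = - (transpose_mat W * K * W)"
proof (rule eq_matI)
  fix x y assume "x < dim_row (- (transpose_mat W * K * W))" "y < dim_col (- (transpose_mat W * K * W))"
  then have xy: "x < n" "y < n" using W by auto
  have "transpose_mat (transpose_mat W * K * W) $$ (x,y) = (transpose_mat W * K * W) $$ (y,x)"
    using W K xy by simp
  also have "\<dots> = col W y \<bullet> (K *\<^sub>v col W x)"
    by (rule index_congruence_mat[OF W K xy(2,1)])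
  also have "\<dots> = - (col W x \<bullet> (K *\<^sub>v col W y))"
    using W K xy by (intro skew_scalar_prod_mult_mat_vec[OF skew K]) auto
  also have "\<dots> = - (transpose_mat W * K * W) $$ (x,y)"
    by (simp only: index_congruence_mat[OF W K xy])
  also have "\<dots> = (- (transpose_mat W * K * W)) $$ (x,y)"
    using W K xy by simp
  finally show "transpose_mat (transpose_mat W * K * W) $$ (x,y) = (- (transpose_mat W * K * W)) $$ (x,y)" .
qed (use W K in auto)

lemma wedge_mult_mat_vec:
  fixes K :: "'a::comm_ring mat"
  assumes "K \<in> carrier_mat m m" "u \<in> carrier_vec m" "v \<in> carrier_vec m" "y \<in> carrier_vec m"
    and "\<And>a b. a < m \<Longrightarrow> b < m \<Longrightarrow> K $$ (a,b) = u$a * v$b - v$a * u$b"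
  shows "K *\<^sub>v y = (v \<bullet> y) \<cdot>\<^sub>v u - (u \<bullet> y) \<cdot>\<^sub>v v"
proof (rule eq_vecI)
  fix a assume "a < dim_vec ((v \<bullet> y) \<cdot>\<^sub>v u - (u \<bullet> y) \<cdot>\<^sub>v v)"
  then have a: "a < m" using assms by simp
  have "row K a \<bullet> y = (\<Sum>b = 0..<m. (u$a * v$b - v$a * u$b) * y$b)"
    using assms a unfolding scalar_prod_def by (intro sum.cong) auto
  also have "\<dots> = u$a * (v \<bullet> y) - v$a * (u \<bullet> y)"
    using assms unfolding scalar_prod_def
    by (simp add: algebra_simps sum_subtractf sum_distrib_left)
  finally show "(K *\<^sub>v y) $ a = ((v \<bullet> y) \<cdot>\<^sub>v u - (u \<bullet> y) \<cdot>\<^sub>v v) $ a"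
    using assms a by (simp add: mult.commute)
qed (use assms in auto)

lemma scalar_prod_wedge_mult_mat_vec:
  fixes K :: "'a::comm_ring mat"
  assumes "K \<in> carrier_mat m m" "u \<in> carrier_vec m" "v \<in> carrier_vec m"
    and "x \<in> carrier_vec m" "y \<in> carrier_vec m"
    and "\<And>a b. a < m \<Longrightarrow> b < m \<Longrightarrow> K $$ (a,b) = u$a * v$b - v$a * u$b"
  shows "x \<bullet> (K *\<^sub>v y) = (x \<bullet> u) * (y \<bullet> v) - (x \<bullet> v) * (y \<bullet> u)"
  using assms
  by (simp add: wedge_mult_mat_vec[OF assms(1-3,5,6)] scalar_prod_minus_distrib[of _ m]
      comm_scalar_prod[of y m] mult.commute)

lemma rank_le_sum_of_products:
  fixes A :: "'a::field mat" and f g :: "nat \<Rightarrow> nat \<Rightarrow> 'a"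
  assumes "A \<in> carrier_mat nr nc"
    and "\<And>r c. r < nr \<Longrightarrow> c < nc \<Longrightarrow> A $$ (r,c) = (\<Sum>a<m. f a r * g a c)"
  shows "vec_space.rank nr A \<le> m"
  using assms
proof (induction m arbitrary: A)
  case 0
  then have "A = 0\<^sub>m nr nc" by (intro eq_matI) auto
  then show ?case by (simp add: vec_space.rank_0I)
next
  case (Suc m)
  define A' where "A' = mat nr nc (\<lambda>(r,c). \<Sum>a<m. f a r * g a c)"
  define B where "B = mat nr nc (\<lambda>(r,c). f m r * g m c)"
  have A': "A' \<in> carrier_mat nr nc" and B: "B \<in> carrier_mat nr nc"
    by (auto simp: A'_def B_def)
  have "A = A' + B" using Suc.prems by (intro eq_matI) (auto simp: A'_def B_def)
  moreover have "vec_space.rank nr A' \<le> m"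
    by (rule Suc.IH[OF A']) (simp add: A'_def)
  moreover have "vec_space.rank nr B \<le> 1"
    by (rule vec_space.rank_le_1_product_entries[OF B, of "f m" "g m"]) (simp add: B_def)
  ultimately show ?case
    using vec_space.rank_subadditive[OF A' B] by simp
qed

lemma rank_le_of_scalar_prod_entries:
  fixes A :: "'a::field mat"
  assumes "A \<in> carrier_mat nr nc" "\<And>c. c < nc \<Longrightarrow> y c \<in> carrier_vec m"
    and "\<And>r c. r < nr \<Longrightarrow> c < nc \<Longrightarrow> A $$ (r,c) = x r \<bullet> y c"
  shows "vec_space.rank nr A \<le> m"
proof (rule rank_le_sum_of_products[OF assms(1), where f = "\<lambda>a r. x r $ a" and g = "\<lambda>a c. y c $ a"])
  fix r c assume rc: "r < nr" "c < nc"
  have "dim_vec (y c) = m" using assms(2)[OF rc(2)] by simp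
  then show "A $$ (r,c) = (\<Sum>a<m. x r $ a * y c $ a)"
    using assms(3)[OF rc] by (simp add: scalar_prod_def lessThan_atLeast0)
qed

lemma rank_le_2_wedge:
  fixes A :: "'a::field mat"
  assumes "A \<in> carrier_mat nr nc"
    and "\<And>r c. r < nr \<Longrightarrow> c < nc \<Longrightarrow> A $$ (r,c) = F r * G c - G r * F c"
  shows "vec_space.rank nr A \<le> 2"
  by (rule rank_le_sum_of_products[OF assms(1), where f = "\<lambda>a. if a = 0 then F else - G" and g = "\<lambda>a. if a = 0 then G else F"])
     (simp add: assms(2) eval_nat_numeral)

lemma pf4_wedge:
  assumes "\<And>r c. r < n \<Longrightarrow> c < n \<Longrightarrow> A $$ (r,c) = F r * G c - G r * F c"
    and "a < n" "b < n" "c < n" "d < n"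
  shows "pf4 A a b c d = 0"
  using assms(2-5) by (simp add: pf4_def assms(1) algebra_simps)

lemma less_4_iff: "(i::nat) < 4 \<longleftrightarrow> i = 0 \<or> i = 1 \<or> i = 2 \<or> i = 3"
  by auto

lemma pf4_skew_4x4_eq_0:
  fixes K :: "complex mat"
  assumes skew: "transpose_mat K = - K" and K: "K \<in> carrier_mat 4 4" and pf: "pf4 K 0 1 2 3 = 0"
    and "s < 4" "t < 4" "a < 4" "b < 4"
  shows "pf4 K s t a b = 0"
proof -
  have lower: "K $$ (i,j) = - K $$ (j,i)" if "j < i" "i < 4" for i j
    using that by (intro skew_mat_entry[OF skew K]) auto
  have diag: "K $$ (i,i) = 0" if "i < 4" for i
    using skew_mat_entry[OF skew K that that] by simp
  have "pf4 K s t a b \<in> {0, pf4 K 0 1 2 3, - pf4 K 0 1 2 3}"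
    using assms(4-7) unfolding less_4_iff
    by (elim disjE; simp add: pf4_def lower diag algebra_simps)
  then show ?thesis using pf by auto
qed

lemma skew_4x4_wedge:
  fixes K :: "complex mat"
  assumes skew: "transpose_mat K = - K" and K: "K \<in> carrier_mat 4 4" and pf: "pf4 K 0 1 2 3 = 0"
  obtains u v where "u \<in> carrier_vec 4" "v \<in> carrier_vec 4"
    "\<And>a b. a < 4 \<Longrightarrow> b < 4 \<Longrightarrow> K $$ (a,b) = u$a * v$b - v$a * u$b"
proof (cases "\<forall>s<4. \<forall>t<4. K $$ (s,t) = 0")
  case True
  then show ?thesis by (intro that[of "0\<^sub>v 4" "0\<^sub>v 4"]) auto
next
  case False
  then obtain s t where st: "s < 4" "t < 4" "K $$ (s,t) \<noteq> 0" by auto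
  show ?thesis
  proof (rule that[of "(1 / K $$ (s,t)) \<cdot>\<^sub>v row K s" "row K t"])
    fix a b :: nat assume ab: "a < 4" "b < 4"
    have "pf4 K s t a b = 0" by (rule pf4_skew_4x4_eq_0[OF skew K pf st(1,2) ab])
    then have "K $$ (s,t) * K $$ (a,b) = K $$ (s,a) * K $$ (t,b) - K $$ (t,a) * K $$ (s,b)"
      unfolding pf4_def by (simp add: algebra_simps)
    then show "K $$ (a,b) = ((1 / K $$ (s,t)) \<cdot>\<^sub>v row K s) $ a * row K t $ b
        - row K t $ a * ((1 / K $$ (s,t)) \<cdot>\<^sub>v row K s) $ b"
      using K ab st by (simp add: carrier_matD field_simps)
  qed (use K st in simp_all)
qed

lemma eq_mat_4x4I:
  assumes "A \<in> carrier_mat 4 4" "B \<in> carrier_mat 4 4"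
    and "\<forall>i\<in>{0,1,2,3}. \<forall>j\<in>{0,1,2,3}. A $$ (i,j) = B $$ (i,j)"
  shows "A = B"
proof (rule eq_matI)
  fix i j assume "i < dim_row B" "j < dim_col B"
  then have "i \<in> {0,1,2,3}" "j \<in> {0,1,2,3}" using assms(2) by auto
  then show "A $$ (i,j) = B $$ (i,j)" using assms(3) by blast
qed (use assms in auto)

lemma mat_of_rows_list_carrier: "length rs = nr \<Longrightarrow> mat_of_rows_list nc rs \<in> carrier_mat nr nc"
  by (simp add: mat_of_rows_list_def)

lemma index_mat_of_rows_list [simp]:
  "i < length rs \<Longrightarrow> j < nc \<Longrightarrow> mat_of_rows_list nc rs $$ (i,j) = rs ! i ! j"
  by (simp add: mat_of_rows_list_def)

lemma dim_mat_of_rows_list [simp]: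
  "dim_row (mat_of_rows_list nc rs) = length rs" "dim_col (mat_of_rows_list nc rs) = nc"
  by (simp_all add: mat_of_rows_list_def)

lemma kron_2x2_carrier: "A \<in> carrier_mat 2 2 \<Longrightarrow> B \<in> carrier_mat 2 2 \<Longrightarrow> kron A B \<in> carrier_mat 4 4"
  by (simp add: kron_def)

lemma index_kron_2x2:
  "A \<in> carrier_mat 2 2 \<Longrightarrow> B \<in> carrier_mat 2 2 \<Longrightarrow> i < 4 \<Longrightarrow> j < 4 \<Longrightarrow>
   kron A B $$ (i,j) = A $$ (i div 2, j div 2) * B $$ (i mod 2, j mod 2)"
  by (simp add: kron_def)

lemma Gamma1_eq: "Gamma1 = mat_of_rows_list 4 [[0,0,-1,0],[0,0,0,1],[1,0,0,0],[0,-1,0,0]]"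
  unfolding Gamma1_def mA_def mD_def
  by (rule eq_mat_4x4I) (simp_all add: kron_2x2_carrier index_kron_2x2 mat_of_rows_list_carrier)

lemma Gamma2_eq: "Gamma2 = mat_of_rows_list 4 [[0,0,-1,0],[0,0,0,1],[-1,0,0,0],[0,1,0,0]]"
  unfolding Gamma2_def mB_def mD_def
  by (rule eq_mat_4x4I) (simp_all add: kron_2x2_carrier index_kron_2x2 mat_of_rows_list_carrier)

lemma Gamma3_eq: "Gamma3 = mat_of_rows_list 4 [[0,1,0,0],[1,0,0,0],[0,0,0,1],[0,0,1,0]]"
  unfolding Gamma3_def mB_def
  by (rule eq_mat_4x4I) (simp_all add: kron_2x2_carrier index_kron_2x2 mat_of_rows_list_carrier)

lemma Gamma4_eq: "Gamma4 = mat_of_rows_list 4 [[0,-\<i>,0,0],[\<i>,0,0,0],[0,0,0,-\<i>],[0,0,\<i>,0]]"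
  unfolding Gamma4_def mY_def
  by (rule eq_mat_4x4I) (simp_all add: kron_2x2_carrier index_kron_2x2 mat_of_rows_list_carrier)

lemma Gamma5_eq: "Gamma5 = mat_of_rows_list 4 [[1,0,0,0],[0,-1,0,0],[0,0,-1,0],[0,0,0,1]]"
  unfolding Gamma5_def Gamma1_eq Gamma2_eq Gamma3_eq Gamma4_eq
  by (rule eq_mat_4x4I) (simp_all add: mat_of_rows_list_carrier mult_carrier_mat[of _ 4 4 _ 4],
      simp_all add: scalar_prod_def eval_nat_numeral)

lemma Cconj_eq: "Cconj = mat_of_rows_list 4 [[0,0,0,-\<i>],[0,0,-\<i>,0],[0,\<i>,0,0],[\<i>,0,0,0]]"
  unfolding Cconj_def Gamma1_eq Gamma4_eq
  by (rule eq_mat_4x4I) (simp_all add: mat_of_rows_list_carrier mult_carrier_mat[of _ 4 4 _ 4],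
      simp_all add: scalar_prod_def eval_nat_numeral)

lemma Gamma_carrier:
  "Gamma1 \<in> carrier_mat 4 4" "Gamma2 \<in> carrier_mat 4 4" "Gamma3 \<in> carrier_mat 4 4"
  "Gamma4 \<in> carrier_mat 4 4" "Gamma5 \<in> carrier_mat 4 4"
  by (simp_all add: Gamma1_eq Gamma2_eq Gamma3_eq Gamma4_eq Gamma5_eq mat_of_rows_list_carrier)

lemma Cconj_carrier: "Cconj \<in> carrier_mat 4 4"
  by (simp add: Cconj_eq mat_of_rows_list_carrier)

lemma slash_carrier: "slash x \<in> carrier_mat 4 4"
  using Gamma_carrier by (simp add: slash_def Gamma_def)

lemma Cconj_slash_carrier: "Cconj * slash x \<in> carrier_mat 4 4"
  using Cconj_carrier slash_carrier by (rule mult_carrier_mat)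

lemma Cconj_slash_eq: "Cconj * slash x = mat_of_rows_list 4
   [[0, -\<i>*x$0 - \<i>*x$1, -\<i>*x$2 + x$3, -\<i>*x$4],
    [\<i>*x$0 + \<i>*x$1, 0, \<i>*x$4, -\<i>*x$2 - x$3],
    [\<i>*x$2 - x$3, -\<i>*x$4, 0, -\<i>*x$0 + \<i>*x$1],
    [\<i>*x$4, \<i>*x$2 + x$3, \<i>*x$0 - \<i>*x$1, 0]]"
  unfolding slash_def Gamma_def Cconj_eq Gamma1_eq Gamma2_eq Gamma3_eq Gamma4_eq Gamma5_eq
  by (rule eq_mat_4x4I) (simp_all add: mat_of_rows_list_carrier mult_carrier_mat[of _ 4 4 _ 4],
      simp_all add: scalar_prod_def eval_nat_numeral algebra_simps)

lemma Cconj_skew: "transpose_mat Cconj = - Cconj"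
  unfolding Cconj_eq by (rule eq_mat_4x4I) (simp_all add: mat_of_rows_list_carrier)

lemma Cconj_slash_skew: "transpose_mat (Cconj * slash x) = - (Cconj * slash x)"
  unfolding Cconj_slash_eq by (rule eq_mat_4x4I) (simp_all add: mat_of_rows_list_carrier)

lemma mink_self: "mink x x = - x$0 * x$0 + x$1 * x$1 + x$2 * x$2 + x$3 * x$3 + x$4 * x$4"
  by (simp add: mink_def eval_nat_numeral atLeastLessThanSuc add.assoc)

lemma pf4_Cconj_slash: "pf4 (Cconj * slash x) 0 1 2 3 = mink x x"
  unfolding Cconj_slash_eq pf4_def mink_self by (simp add: algebra_simps)

lemma ket_carrier: "ket p z i \<in> carrier_vec 4"
  using carrier_matD(1)[OF slash_carrier] by (intro carrier_vecI) (simp add: ket_def)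

lemma angle2_eq:
  assumes "dim_vec (z k) = 4"
  shows "angle2 p z i k = ket p z i \<bullet> ((Cconj * slash (p k)) *\<^sub>v z k)"
proof -
  have "z k \<in> carrier_vec 4" using assms by (rule carrier_vecI)
  then show ?thesis
    unfolding angle2_def ket_def by (simp add: assoc_mult_mat_vec[OF Cconj_carrier slash_carrier])
qed

lemma angle2_antisym: "angle2 p z i k = - angle2 p z k i"
  unfolding angle2_def
  by (rule skew_scalar_prod_mult_mat_vec[OF Cconj_skew Cconj_carrier ket_carrier ket_carrier])

lemma Wmat_carrier: "Wmat n p z j \<in> carrier_mat 4 n"
  by (simp add: Wmat_def)

lemma col_Wmat:
  assumes "x < n" "dim_vec (z j) = 4"
  shows "col (Wmat n p z j) x = (if x = j then z j else ket p z x)"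
  using assms carrier_vecD[OF ket_carrier, of p z x] by (intro eq_vecI) (auto simp: Wmat_def)

lemma Mmat_congruence:
  "Mmat n p z j = transpose_mat (Wmat n p z j) * (Cconj * slash (p j)) * Wmat n p z j"
  unfolding Mmat_def
  using Wmat_carrier[of n p z j] Cconj_carrier slash_carrier[of "p j"]
  by (simp add: assoc_mult_mat[of _ n 4 _ 4 _ 4])

lemma Mmat_carrier: "Mmat n p z j \<in> carrier_mat n n"
  unfolding Mmat_congruence
  by (metis Cconj_slash_carrier Wmat_carrier mult_carrier_mat transpose_carrier_mat)

lemma Mmat_skew: "transpose_mat (Mmat n p z j) = - Mmat n p z j"
  unfolding Mmat_congruence
  by (rule skew_congruence_mat[OF Wmat_carrier Cconj_slash_carrier Cconj_slash_skew])

lemma index_Mmat: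
  assumes "x < n" "y < n" "dim_vec (z j) = 4"
  shows "Mmat n p z j $$ (x,y) = (if x = j then z j else ket p z x) \<bullet>
           ((Cconj * slash (p j)) *\<^sub>v (if y = j then z j else ket p z y))"
proof -
  have "Mmat n p z j $$ (x,y) = col (Wmat n p z j) x \<bullet> ((Cconj * slash (p j)) *\<^sub>v col (Wmat n p z j) y)"
    unfolding Mmat_congruence by (rule index_congruence_mat[OF Wmat_carrier Cconj_slash_carrier assms(1,2)])
  then show ?thesis using col_Wmat[of x n z j p] col_Wmat[of y n z j p] assms by simp
qed

lemma Mmat_wedge:
  assumes "mink (p j) (p j) = 0" "dim_vec (z j) = 4"
  obtains F G where "\<And>x y. x < n \<Longrightarrow> y < n \<Longrightarrow> Mmat n p z j $$ (x,y) = F x * G y - G x * F y"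
proof -
  obtain u v where uv: "u \<in> carrier_vec 4" "v \<in> carrier_vec 4"
    "\<And>a b. a < 4 \<Longrightarrow> b < 4 \<Longrightarrow> (Cconj * slash (p j)) $$ (a,b) = u$a * v$b - v$a * u$b"
    using skew_4x4_wedge[OF Cconj_slash_skew Cconj_slash_carrier] assms(1) pf4_Cconj_slash by metis
  let ?w = "\<lambda>x. if x = j then z j else ket p z x"
  have w: "?w x \<in> carrier_vec 4" for x
    using assms(2) ket_carrier by (cases "x = j") (auto intro: carrier_vecI)
  show ?thesis
    by (rule that[of "\<lambda>x. ?w x \<bullet> u" "\<lambda>x. ?w x \<bullet> v"])
       (use assms(2) in \<open>simp add: index_Mmat scalar_prod_wedge_mult_mat_vec[OF Cconj_slash_carrier uv(1,2) w w uv(3)]\<close>)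
qed

lemma STmat_rank_le_4: "vec_space.rank n (STmat n p z) \<le> 4"
proof (rule rank_le_of_scalar_prod_entries[where x = "ket p z"])
  let ?y = "\<lambda>c. if c < n then Cconj *\<^sub>v ket p z c
                else (Cconj * slash (p ((c - n) div n))) *\<^sub>v ket p z ((c - n) mod n)"
  show "STmat n p z \<in> carrier_mat n (n * n + n)" by (simp add: STmat_def)
  show "?y c \<in> carrier_vec 4" for c
    using carrier_matD(1)[OF Cconj_carrier] carrier_matD(1)[OF Cconj_slash_carrier]
    by (intro carrier_vecI) simp
  show "STmat n p z $$ (r,c) = ket p z r \<bullet> ?y c" if "r < n" "c < n * n + n" for r c
  proof -
    have "\<not> c < n \<Longrightarrow> (c - n) mod n < n" using that by simp
    then show ?thesis
      using that by (simp add: STmat_def Smat_def Tmat_def angle2_def angle3_def)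
  qed
qed

theorem mainTheorem10:
  fixes n :: nat and p z :: "nat \<Rightarrow> complex vec"
  assumes "n \<ge> 4"
    and "in_V n p"
    and "\<forall>i<n. dim_vec (z i) = 4"
  shows "(\<forall>j<n.
           Mmat n p z j \<in> carrier_mat n n
         \<and> transpose_mat (Mmat n p z j) = - Mmat n p z j
         \<and> vec_space.rank n (Mmat n p z j) \<le> 2
         \<and> (\<forall>i<n. \<forall>k<n. i \<noteq> j \<longrightarrow> k \<noteq> j \<longrightarrow> Mmat n p z j $$ (i,k) = angle3 p z i j k)
         \<and> (\<forall>i<n. i \<noteq> j \<longrightarrow> Mmat n p z j $$ (i,j) = angle2 p z i j)
         \<and> (\<forall>k<n. k \<noteq> j \<longrightarrow> Mmat n p z j $$ (j,k) = angle2 p z j k)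
         \<and> Mmat n p z j $$ (j,j) = 0
         \<and> (\<forall>a b c d. a < b \<longrightarrow> b < c \<longrightarrow> c < d \<longrightarrow> d < n \<longrightarrow> pf4 (Mmat n p z j) a b c d = 0))
       \<and> vec_space.rank n (STmat n p z) \<le> 4"
proof (intro conjI allI impI)
  fix j assume j: "j < n"
  have zj: "dim_vec (z j) = 4" using assms(3) j by simp
  have null: "mink (p j) (p j) = 0" using assms(2) j by (simp add: in_V_def)
  obtain F G where wedge: "\<And>x y. x < n \<Longrightarrow> y < n \<Longrightarrow> Mmat n p z j $$ (x,y) = F x * G y - G x * F y"
    using Mmat_wedge[of p j z n, OF null zj] by blast
  show "Mmat n p z j \<in> carrier_mat n n" by (rule Mmat_carrier)
  show "transpose_mat (Mmat n p z j) = - Mmat n p z j" by (rule Mmat_skew)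
  show "vec_space.rank n (Mmat n p z j) \<le> 2" by (rule rank_le_2_wedge[OF Mmat_carrier wedge])
  show "pf4 (Mmat n p z j) a b c d = 0" if "a < b" "b < c" "c < d" "d < n" for a b c d
    using that by (intro pf4_wedge[OF wedge]) auto
  show "Mmat n p z j $$ (i,k) = angle3 p z i j k" if "i < n" "k < n" "i \<noteq> j" "k \<noteq> j" for i k
    using that zj by (simp add: index_Mmat angle3_def)
  show "Mmat n p z j $$ (i,j) = angle2 p z i j" if "i < n" "i \<noteq> j" for i
    using that j zj by (simp add: index_Mmat angle2_eq)
  show "Mmat n p z j $$ (j,k) = angle2 p z j k" if "k < n" "k \<noteq> j" for k
  proof -
    have "Mmat n p z j $$ (j,k) = - Mmat n p z j $$ (k,j)"
      using skew_mat_entry[OF Mmat_skew Mmat_carrier j that(1)] .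
    also have "\<dots> = - angle2 p z k j" using that j zj by (simp add: index_Mmat angle2_eq)
    finally show ?thesis by (simp add: angle2_antisym[of p z k j])
  qed
  show "Mmat n p z j $$ (j,j) = 0"
    using skew_mat_entry[OF Mmat_skew Mmat_carrier j j] by simp
next
  show "vec_space.rank n (STmat n p z) \<le> 4" by (rule STmat_rank_le_4)
qed

end
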